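(* Let $G=(V,E)$ be a finite, connected, undirected, edge-transitive graph, let $\lambda>0$ be the walking rate and $\gamma>0$ the recovery rate, and consider the two-agent SIS epidemic described in the context, started with both agents infected and located at the same vertex. Let $T$ be the end of epidemic time and $M$ the meeting time from distance one. Write $\mathcal L_T(s)=\mathbb E(e^{-sT})$ and $\mathcal L_M(s)=\mathbb E(e^{-sM})$. Then for every $s>0$, \[ \mathcal L_T(s)=\frac{2\gamma\left(\dfrac{1-\mathcal L_M(s+\gamma)}{s+\gamma}-\dfrac{1-\mathcal L_M(s+2\gamma)}{s+2\gamma}\right)}{\dfrac{2\lambda+s}{2\lambda}-2\mathcal L_M(s+\gamma)+\mathcal L_M(s+2\gamma)}. \]
   Context: Model. $G=(V,E)$ is a finite, connected, undirected graph which is edge-transitive: for any two edges $e_1,e_2\in E$ there is a graph automorphism mapping $e_1$ to $e_2$. Two agents move on $V$ according to independent continuous-time simple random walks $W_1(t),W_2(t)$: each agent stays at its current vertex for an $\mathrm{Exp}(\lambda)$ holding time (independently of everything else), then jumps to a neighbour chosen uniformly at random (so from $i$ it jumps to $j$ at rate $\lambda/d(i)$ if $\{i,j\}\in E$, where $d(i)$ is the degree of $i$). Each agent has a state in $\{S,I\}$ (susceptible/infected). Whenever the two agents occupy the same vertex and at least one of them is infected, the other becomes (or stays) infected immediately. Each infected agent, independently of everything else, returns to state $S$ after an $\mathrm{Exp}(\gamma)$ recovery time (recovery times are memoryless). Initially both agents are infected and at the same vertex. End of epidemic time: $T=\inf\{t\ge0: S_1(t)=S_2(t)=S\}$, where $S_k(t)$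 is the state of agent $k$. Meeting time from distance one: for an edge $\{i,j\}\in E$, $M=\inf\{t\ge 0: W_1(t)=W_2(t)\}$ for the two independent walks started at $W_1(0)=i$, $W_2(0)=j$; by edge-transitivity its distribution does not depend on the chosen edge. *)

theory Defs
  imports "HOL-Probability.Probability"
begin

definition simple_graph :: "'v set \<Rightarrow> 'v set set \<Rightarrow> bool" where
  "simple_graph V E \<longleftrightarrow> finite V \<and>
     (\<forall>e\<in>E. \<exists>a b. a \<in> V \<and> b \<in> V \<and> a \<noteq> b \<and> e = {a, b})"

definition graph_connected :: "'v set \<Rightarrow> 'v set set \<Rightarrow> bool" where
  "graph_connected V E \<longleftrightarrow>
     (\<forall>u\<in>V. \<forall>v\<in>V. (u, v) \<in> {(a, b). {a, b} \<in> E}\<^sup>*)"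

definition graph_automorphism :: "'v set \<Rightarrow> 'v set set \<Rightarrow> ('v \<Rightarrow> 'v) \<Rightarrow> bool" where
  "graph_automorphism V E f \<longleftrightarrow> bij_betw f V V \<and>
     (\<forall>a\<in>V. \<forall>b\<in>V. {a, b} \<in> E \<longleftrightarrow> {f a, f b} \<in> E)"

definition edge_transitive :: "'v set \<Rightarrow> 'v set set \<Rightarrow> bool" where
  "edge_transitive V E \<longleftrightarrow>
     (\<forall>e1\<in>E. \<forall>e2\<in>E. \<exists>f. graph_automorphism V E f \<and> f ` e1 = e2)"

definition deg :: "'v set set \<Rightarrow> 'v \<Rightarrow> nat" where
  "deg E i = card {j. {i, j} \<in> E}"

text \<open>A CTMC with off-diagonal rates q x y on a finite state set S is constructed from
  its jump chain: in state x it waits an Exp(total rate) holding time and then jumps to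
  y \<noteq> x with probability q x y / total rate.  The randomness at step n is an independent
  family (indexed by the possible current state) of (holding time, next state) samples.\<close>

definition total_rate :: "('s \<Rightarrow> 's \<Rightarrow> real) \<Rightarrow> 's set \<Rightarrow> 's \<Rightarrow> real" where
  "total_rate q S x = (\<Sum>y\<in>S - {x}. q x y)"

definition jump_pmf :: "('s \<Rightarrow> 's \<Rightarrow> real) \<Rightarrow> 's set \<Rightarrow> 's \<Rightarrow> 's pmf" where
  "jump_pmf q S x =
     embed_pmf (\<lambda>y. if y \<in> S \<and> y \<noteq> x then q x y / total_rate q S x else 0)"

definition ctmc_step :: "('s \<Rightarrow> 's \<Rightarrow> real) \<Rightarrow> 's set \<Rightarrow> ('s \<Rightarrow> real \<times> 's) measure" where
  "ctmc_step q S = PiM S (\<lambda>x.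
      density lborel (exponential_density (total_rate q S x))
        \<Otimes>\<^sub>M measure_pmf (jump_pmf q S x))"

definition ctmc_source :: "('s \<Rightarrow> 's \<Rightarrow> real) \<Rightarrow> 's set \<Rightarrow> (nat \<Rightarrow> 's \<Rightarrow> real \<times> 's) measure" where
  "ctmc_source q S = PiM UNIV (\<lambda>_::nat. ctmc_step q S)"

primrec ctmc_state :: "'s \<Rightarrow> (nat \<Rightarrow> 's \<Rightarrow> real \<times> 's) \<Rightarrow> nat \<Rightarrow> 's" where
  "ctmc_state x0 \<omega> 0 = x0"
| "ctmc_state x0 \<omega> (Suc n) = snd (\<omega> n (ctmc_state x0 \<omega> n))"

definition ctmc_hold :: "'s \<Rightarrow> (nat \<Rightarrow> 's \<Rightarrow> real \<times> 's) \<Rightarrow> nat \<Rightarrow> real" where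
  "ctmc_hold x0 \<omega> n = fst (\<omega> n (ctmc_state x0 \<omega> n))"

text \<open>Jump times: J n = sum of the first n holding times; the process equals
  ctmc_state x0 \<omega> n on [J n, J (n+1)).\<close>
definition ctmc_jump_time :: "'s \<Rightarrow> (nat \<Rightarrow> 's \<Rightarrow> real \<times> 's) \<Rightarrow> nat \<Rightarrow> real" where
  "ctmc_jump_time x0 \<omega> n = (\<Sum>k<n. ctmc_hold x0 \<omega> k)"

text \<open>exp(-s * tau_A), where tau_A is the hitting time of A (value 0 when tau_A = infinity).\<close>
definition hit_exp :: "'s \<Rightarrow> 's set \<Rightarrow> real \<Rightarrow> (nat \<Rightarrow> 's \<Rightarrow> real \<times> 's) \<Rightarrow> real" where
  "hit_exp x0 A s \<omega> =
     (if \<exists>n. ctmc_state x0 \<omega> n \<in> A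
      then exp (- s * ctmc_jump_time x0 \<omega> (LEAST n. ctmc_state x0 \<omega> n \<in> A))
      else 0)"

definition hit_laplace :: "('s \<Rightarrow> 's \<Rightarrow> real) \<Rightarrow> 's set \<Rightarrow> 's \<Rightarrow> 's set \<Rightarrow> real \<Rightarrow> real" where
  "hit_laplace q S x0 A s = integral\<^sup>L (ctmc_source q S) (hit_exp x0 A s)"

definition walk2_rate :: "'v set \<Rightarrow> 'v set set \<Rightarrow> real \<Rightarrow> ('v \<times> 'v) \<Rightarrow> ('v \<times> 'v) \<Rightarrow> real" where
  "walk2_rate V E lam = (\<lambda>(x1, x2) (y1, y2).
      (if y2 = x2 \<and> {x1, y1} \<in> E then lam / real (deg E x1) else 0)
    + (if y1 = x1 \<and> {x2, y2} \<in> E then lam / real (deg E x2) else 0))"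

definition meet_laplace :: "'v set \<Rightarrow> 'v set set \<Rightarrow> real \<Rightarrow> 'v \<Rightarrow> 'v \<Rightarrow> real \<Rightarrow> real" where
  "meet_laplace V E lam i j s =
     hit_laplace (walk2_rate V E lam) (V \<times> V) (i, j) {(x, y). x \<in> V \<and> x = y} s"

text \<open>State (x1, x2, b1, b2): positions of the agents and infection flags (True = I).
  Instantaneous infection on co-location is applied after every event.\<close>

definition sis_normalize :: "'v \<times> 'v \<times> bool \<times> bool \<Rightarrow> 'v \<times> 'v \<times> bool \<times> bool" where
  "sis_normalize = (\<lambda>(x1, x2, b1, b2).
     if x1 = x2 \<and> (b1 \<or> b2) then (x1, x2, True, True) else (x1, x2, b1, b2))"

definition sis_rate :: "'v set \<Rightarrow> 'v set set \<Rightarrow> real \<Rightarrow> real \<Rightarrow>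
    ('v \<times> 'v \<times> bool \<times> bool) \<Rightarrow> ('v \<times> 'v \<times> bool \<times> bool) \<Rightarrow> real" where
  "sis_rate V E lam gam = (\<lambda>(x1, x2, b1, b2) \<sigma>'.
      (\<Sum>y\<in>{y\<in>V. {x1, y} \<in> E \<and> sis_normalize (y, x2, b1, b2) = \<sigma>'}. lam / real (deg E x1))
    + (\<Sum>y\<in>{y\<in>V. {x2, y} \<in> E \<and> sis_normalize (x1, y, b1, b2) = \<sigma>'}. lam / real (deg E x2))
    + (if b1 \<and> sis_normalize (x1, x2, False, b2) = \<sigma>' then gam else 0)
    + (if b2 \<and> sis_normalize (x1, x2, b1, False) = \<sigma>' then gam else 0))"

definition sis_states :: "'v set \<Rightarrow> ('v \<times> 'v \<times> bool \<times> bool) set" where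
  "sis_states V = V \<times> V \<times> UNIV \<times> UNIV"

definition sis_end_laplace :: "'v set \<Rightarrow> 'v set set \<Rightarrow> real \<Rightarrow> real \<Rightarrow> 'v \<Rightarrow> real \<Rightarrow> real" where
  "sis_end_laplace V E lam gam v0 s =
     hit_laplace (sis_rate V E lam gam) (sis_states V) (v0, v0, True, True)
       {\<sigma> \<in> sis_states V. \<not> fst (snd (snd \<sigma>)) \<and> \<not> snd (snd (snd \<sigma>))} s"

end

theory Submission
  imports Defs
begin

text \<open>Until the two agents meet, their infection states change only through recoveries, which are
  independent of the walks. Conditioning on the recovery clocks therefore expresses the Laplace
  transform of T from any state through the Laplace transform of the meeting time M at s + gam and
  s + 2 gam and the unknown value c of the transform at the coincident, doubly infected state.
  Edge-transitivity makes the law of M the same from every pair of neighbours, so the first-step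
  equation at the coincident state, from which every jump separates the agents by one edge, is a
  linear equation for c; its solution is the claimed formula. Formally, the function so obtained
  satisfies the first-step equations of the epidemic chain, whose solution is unique for s > 0 by a
  maximum principle.\<close>

section \<open>Hitting-time Laplace transforms of finite Markov chains\<close>

lemma measurable_compose_finite_with_default:
  assumes S: "finite S" and g: "g \<in> measurable M (count_space UNIV)"
    and F: "\<And>i. i \<in> S \<Longrightarrow> (\<lambda>x. F i x) \<in> measurable M N"
    and default: "\<And>x. x \<in> space M \<Longrightarrow> g x \<notin> S \<Longrightarrow> F (g x) x = c" and c: "c \<in> space N"
  shows "(\<lambda>x. F (g x) x) \<in> measurable M N"
proof -
  define g' where "g' x = (if g x \<in> S then Some (g x) else None)" for x
  define F' where "F' i x = (case i of Some j \<Rightarrow> F j x | None \<Rightarrow> c)" for i x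
  have "(\<lambda>x. F' (g' x) x) \<in> measurable M N"
  proof (rule measurable_compose_countable'[where I="insert None (Some ` S)"])
    show "(\<lambda>x. F' i x) \<in> measurable M N" if "i \<in> insert None (Some ` S)" for i
      using that F c by (auto simp: F'_def)
    have "g' \<in> measurable M (count_space UNIV)"
      unfolding g'_def by (rule measurable_compose[OF g]) simp
    then show "g' \<in> measurable M (count_space (insert None (Some ` S)))"
      by (rule measurable_count_space_extend[rotated 2]) (auto simp: g'_def)
    show "countable (insert None (Some ` S))"
      using S by (auto intro: countable_finite)
  qed
  moreover have "F' (g' x) x = F (g x) x" if "x \<in> space M" for x
    using default that by (auto simp: F'_def g'_def)
  ultimately show ?thesis by (simp cong: measurable_cong)
qed

lemma nn_integral_exponential_density_exp:
  fixes l s :: real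
  assumes l: "0 < l" and s: "0 \<le> s"
  shows "(\<integral>\<^sup>+ t. ennreal (exp (- s * t)) \<partial>density lborel (exponential_density l)) = ennreal (l / (l + s))"
proof -
  have density_eq: "exponential_density l t * exp (- s * t) = l / (l + s) * exponential_density (l + s) t" for t
  proof -
    have "exp (- t * l) * exp (- s * t) = exp (- t * (l + s))"
      by (simp add: algebra_simps flip: exp_add)
    then show ?thesis
      using l s by (simp add: exponential_density_def)
  qed
  have "(\<integral>\<^sup>+ t. ennreal (exp (- s * t)) \<partial>density lborel (exponential_density l))
      = (\<integral>\<^sup>+ t. ennreal (exponential_density l t) * ennreal (exp (- s * t)) \<partial>lborel)"
    by (rule nn_integral_density) auto
  also have "\<dots> = (\<integral>\<^sup>+ t. ennreal (l / (l + s)) * ennreal (exponential_density (l + s) t) \<partial>lborel)"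
  proof (intro nn_integral_cong)
    fix t :: real
    have nonneg: "0 \<le> exponential_density (l + s) t" "0 \<le> exponential_density l t"
      using l s by (simp_all add: exponential_density_def)
    then have "ennreal (exponential_density l t) * ennreal (exp (- s * t))
        = ennreal (l / (l + s) * exponential_density (l + s) t)"
      by (simp only: flip: density_eq) (simp add: ennreal_mult)
    then show "ennreal (exponential_density l t) * ennreal (exp (- s * t))
        = ennreal (l / (l + s)) * ennreal (exponential_density (l + s) t)"
      using l s nonneg by (simp add: divide_nonneg_nonneg flip: ennreal_mult)
  qed
  also have "\<dots> = ennreal (l / (l + s)) * emeasure (density lborel (exponential_density (l + s))) UNIV"
    by (simp add: nn_integral_cmult emeasure_density)
  also have "emeasure (density lborel (exponential_density (l + s))) UNIV = 1"
    using prob_space.emeasure_space_1[OF prob_space_exponential_density, of "l + s"] l s by simp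
  finally show ?thesis by simp
qed

lemma ctmc_state_case_nat_Suc:
  "ctmc_state x0 (case_nat x \<omega>) (Suc n) = ctmc_state (snd (x x0)) \<omega> n"
  by (induction n) auto

lemma ctmc_jump_time_case_nat_Suc:
  "ctmc_jump_time x0 (case_nat x \<omega>) (Suc n) = fst (x x0) + ctmc_jump_time (snd (x x0)) \<omega> n"
  unfolding ctmc_jump_time_def ctmc_hold_def
  by (subst sum.lessThan_Suc_shift) (simp add: ctmc_state_case_nat_Suc del: ctmc_state.simps(2))

lemma hit_exp_nonneg: "0 \<le> hit_exp x0 A s \<omega>"
  by (simp add: hit_exp_def)

lemma hit_exp_start_in: "x0 \<in> A \<Longrightarrow> hit_exp x0 A s \<omega> = 1"
  by (auto simp: hit_exp_def ctmc_jump_time_def intro!: exI[of _ 0])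

lemma hit_exp_case_nat:
  assumes "x0 \<notin> A"
  shows "hit_exp x0 A s (case_nat x \<omega>) = exp (- s * fst (x x0)) * hit_exp (snd (x x0)) A s \<omega>"
proof -
  let ?y = "snd (x x0)"
  have hits_iff: "(\<exists>n. ctmc_state x0 (case_nat x \<omega>) n \<in> A) \<longleftrightarrow> (\<exists>n. ctmc_state ?y \<omega> n \<in> A)"
    using assms by (metis ctmc_state.simps(1) ctmc_state_case_nat_Suc not0_implies_Suc)
  show ?thesis
  proof (cases "\<exists>n. ctmc_state ?y \<omega> n \<in> A")
    case True
    then obtain n where n: "ctmc_state ?y \<omega> n \<in> A" by blast
    have "(LEAST n. ctmc_state x0 (case_nat x \<omega>) n \<in> A)
        = Suc (LEAST m. ctmc_state x0 (case_nat x \<omega>) (Suc m) \<in> A)"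
      by (rule Least_Suc[of _ "Suc n"])
        (use n assms in \<open>simp_all add: ctmc_state_case_nat_Suc del: ctmc_state.simps(2)\<close>)
    then have "(LEAST n. ctmc_state x0 (case_nat x \<omega>) n \<in> A) = Suc (LEAST m. ctmc_state ?y \<omega> m \<in> A)"
      by (simp add: ctmc_state_case_nat_Suc del: ctmc_state.simps)
    then show ?thesis
      using True hits_iff
      by (simp add: hit_exp_def ctmc_jump_time_case_nat_Suc algebra_simps flip: exp_add)
  next
    case False
    then show ?thesis using hits_iff by (simp add: hit_exp_def)
  qed
qed

locale finite_ctmc =
  fixes q :: "'s \<Rightarrow> 's \<Rightarrow> real" and S :: "'s set"
  assumes finite_states: "finite S"
    and total_rate_pos: "\<And>x. x \<in> S \<Longrightarrow> 0 < total_rate q S x"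
    and rate_nonneg: "\<And>x y. x \<in> S \<Longrightarrow> y \<in> S \<Longrightarrow> 0 \<le> q x y"
begin

abbreviation "Q \<equiv> total_rate q S"
abbreviation "holding_time x \<equiv> density lborel (exponential_density (Q x))"
abbreviation "jump_target x \<equiv> measure_pmf (jump_pmf q S x)"

lemma pmf_jump_pmf:
  assumes x: "x \<in> S"
  shows "pmf (jump_pmf q S x) y = (if y \<in> S \<and> y \<noteq> x then q x y / Q x else 0)"
  unfolding jump_pmf_def
proof (rule pmf_embed_pmf)
  show "0 \<le> (if y \<in> S \<and> y \<noteq> x then q x y / Q x else 0)" for y
    using rate_nonneg[OF x] total_rate_pos[OF x] by auto
  have "(\<integral>\<^sup>+ y. ennreal (if y \<in> S \<and> y \<noteq> x then q x y / Q x else 0) \<partial>count_space UNIV)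
      = (\<integral>\<^sup>+ y. ennreal (q x y / Q x) \<partial>count_space (S - {x}))"
    by (subst nn_integral_count_space_indicator) (auto intro!: nn_integral_cong simp: indicator_def)
  also have "\<dots> = ennreal (\<Sum>y\<in>S - {x}. q x y / Q x)"
    using finite_states rate_nonneg[OF x] total_rate_pos[OF x]
    by (subst sum_ennreal[symmetric]) (auto simp: nn_integral_count_space_finite)
  also have "(\<Sum>y\<in>S - {x}. q x y / Q x) = 1"
    using total_rate_pos[OF x] by (simp add: sum_divide_distrib[symmetric] total_rate_def)
  finally show "(\<integral>\<^sup>+ y. ennreal (if y \<in> S \<and> y \<noteq> x then q x y / Q x else 0) \<partial>count_space UNIV) = 1"
    by simp
qed

lemma set_pmf_jump_pmf: "x \<in> S \<Longrightarrow> set_pmf (jump_pmf q S x) \<subseteq> S - {x}"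
  by (auto simp: set_pmf_eq pmf_jump_pmf split: if_splits)

lemma prob_space_holding_jump: "x \<in> S \<Longrightarrow> prob_space (holding_time x \<Otimes>\<^sub>M jump_target x)"
  using total_rate_pos
  by (intro prob_space_pair prob_space_exponential_density prob_space_measure_pmf) auto

lemma prob_space_ctmc_step: "prob_space (ctmc_step q S)"
  unfolding ctmc_step_def by (intro prob_space_PiM prob_space_holding_jump)

lemma prob_space_ctmc_source: "prob_space (ctmc_source q S)"
  unfolding ctmc_source_def by (intro prob_space_PiM prob_space_ctmc_step)

lemma space_ctmc_source_undefined:
  "\<omega> \<in> space (ctmc_source q S) \<Longrightarrow> y \<notin> S \<Longrightarrow> \<omega> n y = undefined"
  unfolding ctmc_source_def ctmc_step_def
  by (auto simp: space_PiM PiE_def extensional_def)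

lemma measurable_ctmc_source_sample:
  assumes "y \<in> S"
  shows "(\<lambda>\<omega>. \<omega> n y) \<in> measurable (ctmc_source q S) (holding_time y \<Otimes>\<^sub>M jump_target y)"
proof -
  have "(\<lambda>\<omega>. \<omega> n) \<in> measurable (ctmc_source q S) (ctmc_step q S)"
    unfolding ctmc_source_def by (rule measurable_component_singleton) simp
  moreover have "(\<lambda>f. f y) \<in> measurable (ctmc_step q S) (holding_time y \<Otimes>\<^sub>M jump_target y)"
    unfolding ctmc_step_def using assms by (rule measurable_component_singleton)
  ultimately show ?thesis by (rule measurable_compose)
qed

lemma measurable_ctmc_state[measurable]:
  "(\<lambda>\<omega>. ctmc_state x0 \<omega> n) \<in> measurable (ctmc_source q S) (count_space UNIV)"
proof (induction n)
  case (Suc n)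
  have "(\<lambda>\<omega>. snd (\<omega> n y)) \<in> measurable (ctmc_source q S) (count_space UNIV)" if "y \<in> S" for y
    using measurable_compose[OF measurable_ctmc_source_sample[OF that] measurable_snd] by simp
  then have "(\<lambda>\<omega>. (\<lambda>y \<omega>. snd (\<omega> n y)) (ctmc_state x0 \<omega> n) \<omega>) \<in> measurable (ctmc_source q S) (count_space UNIV)"
    by (rule measurable_compose_finite_with_default[OF finite_states Suc, where c="snd undefined"])
       (auto simp: space_ctmc_source_undefined)
  then show ?case by simp
qed simp

lemma measurable_ctmc_hold[measurable]:
  "(\<lambda>\<omega>. ctmc_hold x0 \<omega> n) \<in> borel_measurable (ctmc_source q S)"
proof -
  have "(\<lambda>\<omega>. fst (\<omega> n y)) \<in> borel_measurable (ctmc_source q S)" if "y \<in> S" for y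
    using measurable_compose[OF measurable_ctmc_source_sample[OF that] measurable_fst] by simp
  then have "(\<lambda>\<omega>. (\<lambda>y \<omega>. fst (\<omega> n y)) (ctmc_state x0 \<omega> n) \<omega>) \<in> borel_measurable (ctmc_source q S)"
    by (rule measurable_compose_finite_with_default[OF finite_states measurable_ctmc_state,
          where c="fst undefined"])
       (auto simp: space_ctmc_source_undefined)
  then show ?thesis by (simp add: ctmc_hold_def)
qed

lemma measurable_ctmc_jump_time[measurable]:
  "(\<lambda>\<omega>. ctmc_jump_time x0 \<omega> n) \<in> borel_measurable (ctmc_source q S)"
  unfolding ctmc_jump_time_def by measurable

lemma pred_ctmc_state_in[measurable]:
  "Measurable.pred (ctmc_source q S) (\<lambda>\<omega>. ctmc_state x0 \<omega> n \<in> A)"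
  using measurable_sets[OF measurable_ctmc_state, of "A" x0 n]
  by (simp add: Measurable.pred_def vimage_def Int_def conj_commute)

lemma borel_measurable_hit_exp[measurable]:
  "hit_exp x0 A s \<in> borel_measurable (ctmc_source q S)"
proof -
  have least: "(\<lambda>\<omega>. LEAST n. ctmc_state x0 \<omega> n \<in> A) \<in> measurable (ctmc_source q S) (count_space UNIV)"
    by (rule measurable_Least) (rule pred_ctmc_state_in)
  have "(\<lambda>\<omega>. exp (- s * ctmc_jump_time x0 \<omega> (LEAST n. ctmc_state x0 \<omega> n \<in> A)))
      \<in> borel_measurable (ctmc_source q S)"
    by (rule measurable_compose_countable[OF _ least]) measurable
  moreover have "Measurable.pred (ctmc_source q S) (\<lambda>\<omega>. \<exists>n. ctmc_state x0 \<omega> n \<in> A)"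
    by (rule pred_intros_countable) (rule pred_ctmc_state_in)
  ultimately show ?thesis
    unfolding hit_exp_def[abs_def] by measurable
qed

lemma AE_holding_jump_valid:
  assumes y: "y \<in> S"
  shows "AE z in holding_time y \<Otimes>\<^sub>M jump_target y. 0 \<le> fst z \<and> snd z \<in> S"
proof -
  interpret holding: prob_space "holding_time y"
    using total_rate_pos[OF y] by (rule prob_space_exponential_density)
  interpret pair_prob_space "holding_time y" "jump_target y" ..
  have "AE t in holding_time y. 0 \<le> t"
    by (subst AE_density) (auto simp: exponential_density_def not_less intro!: AE_I2)
  moreover have jump_in_S: "AE z in jump_target y. z \<in> S"
    using set_pmf_jump_pmf[OF y] by (auto simp: AE_measure_pmf_iff)
  ultimately have "AE t in holding_time y. AE z in jump_target y. 0 \<le> fst (t, z) \<and> snd (t, z) \<in> S"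
    by (auto elim!: eventually_mono)
  moreover have "{z \<in> space (holding_time y \<Otimes>\<^sub>M jump_target y). 0 \<le> fst z \<and> snd z \<in> S}
      \<in> sets (holding_time y \<Otimes>\<^sub>M jump_target y)"
  proof -
    have "{z \<in> space (holding_time y \<Otimes>\<^sub>M jump_target y). 0 \<le> fst z \<and> snd z \<in> S} = {0..} \<times> S"
      by (auto simp: space_pair_measure)
    then show ?thesis by (simp add: pair_measureI)
  qed
  ultimately show ?thesis by (rule AE_pair_measure[rotated])
qed

definition valid_source :: "(nat \<Rightarrow> 's \<Rightarrow> real \<times> 's) \<Rightarrow> bool" where
  "valid_source \<omega> \<longleftrightarrow> (\<forall>n. \<forall>y\<in>S. 0 \<le> fst (\<omega> n y) \<and> snd (\<omega> n y) \<in> S)"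

lemma AE_valid_source: "AE \<omega> in ctmc_source q S. valid_source \<omega>"
proof -
  have "AE f in ctmc_step q S. \<forall>y\<in>S. 0 \<le> fst (f y) \<and> snd (f y) \<in> S"
    unfolding ctmc_step_def
    by (intro AE_finite_allI[OF finite_states] AE_PiM_component prob_space_holding_jump AE_holding_jump_valid)
  then show ?thesis
    unfolding valid_source_def ctmc_source_def
    by (subst AE_all_countable) (auto intro!: AE_PiM_component prob_space_ctmc_step)
qed

lemma valid_source_ctmc_state:
  "valid_source \<omega> \<Longrightarrow> x0 \<in> S \<Longrightarrow> ctmc_state x0 \<omega> n \<in> S"
  by (induction n) (auto simp: valid_source_def)

lemma valid_source_jump_time_nonneg:
  "valid_source \<omega> \<Longrightarrow> x0 \<in> S \<Longrightarrow> 0 \<le> ctmc_jump_time x0 \<omega> n"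
  unfolding ctmc_jump_time_def ctmc_hold_def
  by (intro sum_nonneg) (auto simp: valid_source_def valid_source_ctmc_state)

lemma valid_source_hit_exp_le_1:
  "valid_source \<omega> \<Longrightarrow> x0 \<in> S \<Longrightarrow> 0 \<le> s \<Longrightarrow> hit_exp x0 A s \<omega> \<le> 1"
  using valid_source_jump_time_nonneg[of \<omega> x0] by (auto simp: hit_exp_def)

lemma integrable_hit_exp:
  assumes "x0 \<in> S" "0 \<le> s"
  shows "integrable (ctmc_source q S) (hit_exp x0 A s)"
proof -
  interpret prob_space "ctmc_source q S" by (rule prob_space_ctmc_source)
  show ?thesis
  proof (rule integrable_const_bound[where B=1])
    show "AE \<omega> in ctmc_source q S. norm (hit_exp x0 A s \<omega>) \<le> 1"
      using AE_valid_source
      by eventually_elim (simp add: assms hit_exp_nonneg valid_source_hit_exp_le_1)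
  qed simp
qed

lemma hit_laplace_nonneg: "0 \<le> hit_laplace q S x0 A s"
  unfolding hit_laplace_def by (intro integral_nonneg_AE) (simp add: hit_exp_nonneg)

lemma nn_integral_hit_exp:
  assumes "x0 \<in> S" "0 \<le> s"
  shows "(\<integral>\<^sup>+ \<omega>. ennreal (hit_exp x0 A s \<omega>) \<partial>ctmc_source q S) = ennreal (hit_laplace q S x0 A s)"
  unfolding hit_laplace_def
  by (intro nn_integral_eq_integral integrable_hit_exp assms) (simp add: hit_exp_nonneg)

lemma hit_laplace_start_in: "x0 \<in> A \<Longrightarrow> hit_laplace q S x0 A s = 1"
proof -
  assume "x0 \<in> A"
  then have "hit_exp x0 A s = (\<lambda>_. 1)"
    by (simp add: hit_exp_start_in fun_eq_iff)
  then show ?thesis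
    using prob_space.prob_space[OF prob_space_ctmc_source] by (simp add: hit_laplace_def)
qed

lemma nn_integral_ctmc_source_case_nat:
  assumes f[measurable]: "f \<in> borel_measurable (ctmc_source q S)"
  shows "(\<integral>\<^sup>+ \<omega>. f \<omega> \<partial>ctmc_source q S) =
     (\<integral>\<^sup>+ x. (\<integral>\<^sup>+ \<omega>. f (case_nat x \<omega>) \<partial>ctmc_source q S) \<partial>ctmc_step q S)"
proof -
  interpret step: prob_space "ctmc_step q S" by (rule prob_space_ctmc_step)
  interpret SQ: sequence_space "ctmc_step q S" ..
  have [measurable]: "f \<in> borel_measurable SQ.S" using f by (simp add: ctmc_source_def)
  have "(\<integral>\<^sup>+ \<omega>. f \<omega> \<partial>SQ.S) = (\<integral>\<^sup>+ p. f (case_nat (fst p) (snd p)) \<partial>(ctmc_step q S \<Otimes>\<^sub>M SQ.S))"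
    by (subst SQ.PiM_iter[symmetric]) (simp add: nn_integral_distr split_beta')
  also have "\<dots> = (\<integral>\<^sup>+ x. \<integral>\<^sup>+ \<omega>. f (case_nat x \<omega>) \<partial>SQ.S \<partial>ctmc_step q S)"
  proof -
    have "(\<lambda>p. f (case_nat (fst p) (snd p))) \<in> borel_measurable (ctmc_step q S \<Otimes>\<^sub>M SQ.S)"
      by measurable
    from SQ.nn_integral_fst[OF this] show ?thesis by simp
  qed
  finally show ?thesis by (simp add: ctmc_source_def)
qed

lemma nn_integral_hit_exp_first_jump:
  assumes x0: "x0 \<in> S" "x0 \<notin> A"
  shows "(\<integral>\<^sup>+ \<omega>. hit_exp x0 A s \<omega> \<partial>ctmc_source q S)
    = (\<integral>\<^sup>+ z. ennreal (exp (- s * fst z)) * (\<integral>\<^sup>+ \<omega>. hit_exp (snd z) A s \<omega> \<partial>ctmc_source q S)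
        \<partial>(holding_time x0 \<Otimes>\<^sub>M jump_target x0))"
    (is "_ = (\<integral>\<^sup>+ z. ?g z \<partial>_)")
proof -
  have [measurable]: "(\<lambda>z. \<integral>\<^sup>+ \<omega>. hit_exp (snd z) A s \<omega> \<partial>ctmc_source q S)
      \<in> borel_measurable (holding_time x0 \<Otimes>\<^sub>M jump_target x0)"
    by (rule measurable_compose[OF measurable_snd]) simp
  have g: "?g \<in> borel_measurable (holding_time x0 \<Otimes>\<^sub>M jump_target x0)"
    by measurable
  have "(\<integral>\<^sup>+ \<omega>. hit_exp x0 A s \<omega> \<partial>ctmc_source q S)
      = (\<integral>\<^sup>+ x. (\<integral>\<^sup>+ \<omega>. hit_exp x0 A s (case_nat x \<omega>) \<partial>ctmc_source q S) \<partial>ctmc_step q S)"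
    by (rule nn_integral_ctmc_source_case_nat) measurable
  also have "\<dots> = (\<integral>\<^sup>+ x. ?g (x x0) \<partial>ctmc_step q S)"
    by (intro nn_integral_cong)
      (simp add: hit_exp_case_nat[OF x0(2)] ennreal_mult hit_exp_nonneg nn_integral_cmult)
  also have "\<dots> = (\<integral>\<^sup>+ z. ?g z \<partial>distr (ctmc_step q S) (holding_time x0 \<Otimes>\<^sub>M jump_target x0) (\<lambda>x. x x0))"
  proof (rule nn_integral_distr[symmetric])
    show "(\<lambda>x. x x0) \<in> measurable (ctmc_step q S) (holding_time x0 \<Otimes>\<^sub>M jump_target x0)"
      unfolding ctmc_step_def using x0(1) by (rule measurable_component_singleton)
  qed (use g in simp)
  also have "distr (ctmc_step q S) (holding_time x0 \<Otimes>\<^sub>M jump_target x0) (\<lambda>x. x x0)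
      = holding_time x0 \<Otimes>\<^sub>M jump_target x0"
    unfolding ctmc_step_def using x0 by (intro distr_PiM_component prob_space_holding_jump) auto
  finally show ?thesis .
qed

lemma nn_integral_holding_jump:
  assumes x: "x \<in> S" and s: "0 \<le> s"
  shows "(\<integral>\<^sup>+ z. ennreal (exp (- s * fst z)) * f (snd z) \<partial>(holding_time x \<Otimes>\<^sub>M jump_target x))
    = ennreal (Q x / (Q x + s)) * (\<Sum>y\<in>S - {x}. ennreal (q x y / Q x) * f y)"
proof -
  have "(\<lambda>z. ennreal (exp (- s * fst z)) * f (snd z)) \<in> borel_measurable (holding_time x \<Otimes>\<^sub>M jump_target x)"
    using measurable_compose[OF measurable_snd, of f] by measurable
  from sigma_finite_measure.nn_integral_fst[OF
      prob_space_imp_sigma_finite[OF prob_space_measure_pmf] this]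
  have "(\<integral>\<^sup>+ z. ennreal (exp (- s * fst z)) * f (snd z) \<partial>(holding_time x \<Otimes>\<^sub>M jump_target x))
      = (\<integral>\<^sup>+ t. \<integral>\<^sup>+ y. ennreal (exp (- s * t)) * f y \<partial>jump_target x \<partial>holding_time x)"
    by simp
  also have "\<dots> = (\<integral>\<^sup>+ t. ennreal (exp (- s * t)) \<partial>holding_time x) * (\<integral>\<^sup>+ y. f y \<partial>jump_target x)"
    by (simp add: nn_integral_cmult nn_integral_multc)
  also have "(\<integral>\<^sup>+ t. ennreal (exp (- s * t)) \<partial>holding_time x) = ennreal (Q x / (Q x + s))"
    by (rule nn_integral_exponential_density_exp[OF total_rate_pos[OF x] s])
  also have "(\<integral>\<^sup>+ y. f y \<partial>jump_target x) = (\<Sum>y\<in>S - {x}. f y * pmf (jump_pmf q S x) y)"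
    by (rule nn_integral_measure_pmf_support) (use finite_states set_pmf_jump_pmf[OF x] in auto)
  also have "\<dots> = (\<Sum>y\<in>S - {x}. ennreal (q x y / Q x) * f y)"
    using x by (intro sum.cong) (auto simp: pmf_jump_pmf mult.commute)
  finally show ?thesis .
qed

lemma hit_laplace_first_step:
  assumes x0: "x0 \<in> S" "x0 \<notin> A" and s: "0 \<le> s"
  shows "(Q x0 + s) * hit_laplace q S x0 A s = (\<Sum>y\<in>S - {x0}. q x0 y * hit_laplace q S y A s)"
proof -
  let ?h = "\<lambda>y. hit_laplace q S y A s"
  have weights_nonneg: "0 \<le> q x0 y / Q x0 * ?h y" if "y \<in> S - {x0}" for y
    using that rate_nonneg[OF x0(1)] total_rate_pos[OF x0(1)] by (simp add: hit_laplace_nonneg)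
  have "ennreal (?h x0) = (\<integral>\<^sup>+ \<omega>. hit_exp x0 A s \<omega> \<partial>ctmc_source q S)"
    using x0 s by (simp add: nn_integral_hit_exp)
  also have "\<dots> = ennreal (Q x0 / (Q x0 + s))
      * (\<Sum>y\<in>S - {x0}. ennreal (q x0 y / Q x0) * (\<integral>\<^sup>+ \<omega>. hit_exp y A s \<omega> \<partial>ctmc_source q S))"
    unfolding nn_integral_hit_exp_first_jump[OF x0] by (rule nn_integral_holding_jump[OF x0(1) s])
  also have "(\<Sum>y\<in>S - {x0}. ennreal (q x0 y / Q x0) * (\<integral>\<^sup>+ \<omega>. hit_exp y A s \<omega> \<partial>ctmc_source q S))
      = ennreal (\<Sum>y\<in>S - {x0}. q x0 y / Q x0 * ?h y)"
  proof (subst sum_ennreal[symmetric])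
    show "0 \<le> q x0 y / Q x0 * ?h y" if "y \<in> S - {x0}" for y
      using that by (rule weights_nonneg)
    show "(\<Sum>y\<in>S - {x0}. ennreal (q x0 y / Q x0) * (\<integral>\<^sup>+ \<omega>. hit_exp y A s \<omega> \<partial>ctmc_source q S))
        = (\<Sum>y\<in>S - {x0}. ennreal (q x0 y / Q x0 * ?h y))"
      using rate_nonneg[OF x0(1)] total_rate_pos[OF x0(1)] s
      by (intro sum.cong refl, subst ennreal_mult') (auto simp: nn_integral_hit_exp)
  qed
  also have "ennreal (Q x0 / (Q x0 + s)) * \<dots> = ennreal (Q x0 / (Q x0 + s) * (\<Sum>y\<in>S - {x0}. q x0 y / Q x0 * ?h y))"
    using total_rate_pos[OF x0(1)] s by (subst ennreal_mult') auto
  finally have "?h x0 = Q x0 / (Q x0 + s) * (\<Sum>y\<in>S - {x0}. q x0 y / Q x0 * ?h y)"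
  proof (subst (asm) ennreal_inj)
    show "0 \<le> Q x0 / (Q x0 + s) * (\<Sum>y\<in>S - {x0}. q x0 y / Q x0 * ?h y)"
      using total_rate_pos[OF x0(1)] s
      by (intro mult_nonneg_nonneg[OF _ sum_nonneg[OF weights_nonneg]]) auto
  qed (simp_all add: hit_laplace_nonneg)
  also have "(\<Sum>y\<in>S - {x0}. q x0 y / Q x0 * ?h y) = (\<Sum>y\<in>S - {x0}. q x0 y * ?h y) / Q x0"
    by (simp add: sum_divide_distrib)
  also have "Q x0 / (Q x0 + s) * \<dots> = (\<Sum>y\<in>S - {x0}. q x0 y * ?h y) / (Q x0 + s)"
    using total_rate_pos[OF x0(1)] by simp
  finally show ?thesis
    using total_rate_pos[OF x0(1)] s by (simp add: field_simps)
qed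

text \<open>Maximum principle: where the difference of two solutions attains its maximal modulus M,
  the first-step equation forces s M \<le> 0.\<close>

lemma hit_laplace_unique:
  assumes s: "0 < s"
    and u_in: "\<And>x. x \<in> S \<Longrightarrow> x \<in> A \<Longrightarrow> u x = 1"
    and u_step: "\<And>x. x \<in> S \<Longrightarrow> x \<notin> A \<Longrightarrow> (Q x + s) * u x = (\<Sum>y\<in>S - {x}. q x y * u y)"
    and x: "x \<in> S"
  shows "u x = hit_laplace q S x A s"
proof -
  define d where "d y = u y - hit_laplace q S y A s" for y
  define M where "M = Max ((\<lambda>y. \<bar>d y\<bar>) ` S)"
  have d_le_M: "\<bar>d y\<bar> \<le> M" if "y \<in> S" for y
    unfolding M_def using finite_states that by (intro Max_ge) auto
  have "M \<in> (\<lambda>y. \<bar>d y\<bar>) ` S"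
    unfolding M_def using finite_states x by (intro Max_in) auto
  then obtain z where z: "z \<in> S" "M = \<bar>d z\<bar>" by auto
  have "M \<le> 0"
  proof (cases "z \<in> A")
    case True
    then show ?thesis using z u_in hit_laplace_start_in by (simp add: d_def)
  next
    case False
    have d_step: "(Q z + s) * d z = (\<Sum>y\<in>S - {z}. q z y * d y)"
      using u_step[OF z(1) False] hit_laplace_first_step[OF z(1) False, of s] s
      by (simp add: d_def algebra_simps sum_subtractf)
    have "(Q z + s) * M = \<bar>\<Sum>y\<in>S - {z}. q z y * d y\<bar>"
      using z total_rate_pos[OF z(1)] s by (simp add: abs_mult flip: d_step)
    also have "\<dots> \<le> (\<Sum>y\<in>S - {z}. q z y * M)"
      using rate_nonneg[OF z(1)] d_le_M
      by (intro order.trans[OF sum_abs sum_mono]) (auto simp: abs_mult intro!: mult_left_mono)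
    also have "\<dots> = Q z * M"
      by (simp add: total_rate_def sum_distrib_right)
    finally have "s * M \<le> 0" by (simp add: algebra_simps)
    then show ?thesis using s by (simp add: mult_le_0_iff)
  qed
  then show ?thesis using d_le_M[OF x] by (simp add: d_def)
qed

text \<open>Pointwise, 2 e^{-(s+g)t} - e^{-(s+2g)t} = e^{-st} (1 - (1 - e^{-gt})^2) \<le> 1.\<close>

lemma hit_laplace_twice_diff_le_1:
  assumes x0: "x0 \<in> S" and s: "0 \<le> s" and g: "0 \<le> g"
  shows "2 * hit_laplace q S x0 A (s + g) - hit_laplace q S x0 A (s + 2 * g) \<le> 1"
proof -
  interpret prob_space "ctmc_source q S" by (rule prob_space_ctmc_source)
  have "2 * hit_exp x0 A (s + g) \<omega> - hit_exp x0 A (s + 2 * g) \<omega> \<le> 1" if "valid_source \<omega>" for \<omega>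
  proof (cases "\<exists>n. ctmc_state x0 \<omega> n \<in> A")
    case True
    define t where "t = ctmc_jump_time x0 \<omega> (LEAST n. ctmc_state x0 \<omega> n \<in> A)"
    define a where "a = exp (- s * t)"
    define b where "b = exp (- g * t)"
    have "0 \<le> t" unfolding t_def using that x0 by (rule valid_source_jump_time_nonneg)
    then have "a \<le> 1" using s by (simp add: a_def mult_nonneg_nonneg)
    have "2 * b - b ^ 2 \<le> 1"
      using sum_squares_ge_zero[of "1 - b" 0] by (simp add: power2_eq_square algebra_simps)
    then have "a * (2 * b - b ^ 2) \<le> a"
      using mult_left_mono[of "2 * b - b ^ 2" 1 a] by (simp add: a_def del: mult_nonneg_nonneg)
    with \<open>a \<le> 1\<close> have "a * (2 * b - b ^ 2) \<le> 1" by linarith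
    moreover have "exp (- (s + g) * t) = a * b" "exp (- (s + 2 * g) * t) = a * b ^ 2"
      by (simp_all add: a_def b_def algebra_simps power2_eq_square flip: exp_add)
    ultimately show ?thesis
      using True by (simp add: hit_exp_def t_def[symmetric] algebra_simps)
  qed (simp add: hit_exp_def)
  then have "(\<integral>\<omega>. 2 * hit_exp x0 A (s + g) \<omega> - hit_exp x0 A (s + 2 * g) \<omega> \<partial>ctmc_source q S)
      \<le> (\<integral>\<omega>. 1 \<partial>ctmc_source q S)"
    using s g x0 integrable_hit_exp[of x0 "s + g" A] integrable_hit_exp[of x0 "s + 2 * g" A]
    by (intro integral_mono_AE) (auto intro: AE_mp[OF AE_valid_source])
  then show ?thesis
    using s g x0 by (simp add: hit_laplace_def integrable_hit_exp prob_space)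
qed

end

lemma sum_if_eq_mult:
  fixes u :: "'s \<Rightarrow> real"
  assumes "finite T"
  shows "(\<Sum>\<sigma>\<in>T. (if P \<and> r = \<sigma> then g else 0) * u \<sigma>) = (if P \<and> r \<in> T then g * u r else 0)"
proof -
  have "(\<Sum>\<sigma>\<in>T. (if P \<and> r = \<sigma> then g else 0) * u \<sigma>) = (\<Sum>\<sigma>\<in>T. if \<sigma> = r then (if P then g * u r else 0) else 0)"
    by (intro sum.cong) auto
  also have "\<dots> = (if P \<and> r \<in> T then g * u r else 0)"
    using assms by (simp add: sum.delta)
  finally show ?thesis .
qed

lemma sum_fibres_const_mult:
  fixes u :: "'s \<Rightarrow> real"
  assumes "finite T" "finite Y" "F ` Y \<subseteq> T"
  shows "(\<Sum>\<sigma>\<in>T. (\<Sum>y\<in>{y\<in>Y. F y = \<sigma>}. c) * u \<sigma>) = (\<Sum>y\<in>Y. c * u (F y))"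
proof -
  have "(\<Sum>\<sigma>\<in>T. (\<Sum>y\<in>{y\<in>Y. F y = \<sigma>}. c) * u \<sigma>) = (\<Sum>\<sigma>\<in>T. \<Sum>y\<in>{y\<in>Y. F y = \<sigma>}. c * u (F y))"
    by (intro sum.cong refl) (auto simp: sum_distrib_right)
  also have "\<dots> = (\<Sum>y\<in>Y. c * u (F y))"
    using assms(2,1,3) by (rule sum.group)
  finally show ?thesis .
qed

section \<open>Meeting time of two walkers\<close>

definition nbr :: "'v set set \<Rightarrow> 'v \<Rightarrow> 'v set" where
  "nbr E x = {y. {x, y} \<in> E}"

lemma deg_eq_card_nbr: "deg E x = card (nbr E x)"
  by (simp add: deg_def nbr_def)

definition walk2_sum :: "'v set set \<Rightarrow> real \<Rightarrow> ('v \<Rightarrow> 'v \<Rightarrow> real) \<Rightarrow> 'v \<Rightarrow> 'v \<Rightarrow> real" where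
  "walk2_sum E lam f x y =
     lam / deg E x * (\<Sum>z\<in>nbr E x. f z y) + lam / deg E y * (\<Sum>z\<in>nbr E y. f x z)"

lemma walk2_sum_add:
  "walk2_sum E lam (\<lambda>u v. f u v + g u v) x y = walk2_sum E lam f x y + walk2_sum E lam g x y"
  by (simp add: walk2_sum_def sum.distrib algebra_simps)

lemma walk2_sum_scale:
  "walk2_sum E lam (\<lambda>u v. c * f u v) x y = c * walk2_sum E lam f x y"
  by (simp add: walk2_sum_def sum_distrib_left sum_divide_distrib algebra_simps)

lemma walk2_sum_const:
  "deg E x > 0 \<Longrightarrow> deg E y > 0 \<Longrightarrow> walk2_sum E lam (\<lambda>_ _. c) x y = 2 * lam * c"
  by (simp add: walk2_sum_def deg_eq_card_nbr)

lemma walk2_sum_cong: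
  assumes "\<And>z. z \<in> nbr E x \<Longrightarrow> f z y = g z y" "\<And>z. z \<in> nbr E y \<Longrightarrow> f x z = g x z"
  shows "walk2_sum E lam f x y = walk2_sum E lam g x y"
  using assms by (simp add: walk2_sum_def)

locale walk_graph =
  fixes V :: "'v set" and E :: "'v set set" and lam :: real
  assumes simple: "simple_graph V E" and connected: "graph_connected V E"
    and edges_nonempty: "E \<noteq> {}" and lam_pos: "0 < lam"
begin

lemma finite_vertices: "finite V"
  using simple by (simp add: simple_graph_def)

lemma edge_vertices:
  assumes "{x, y} \<in> E"
  shows "x \<in> V" "y \<in> V" "x \<noteq> y"
  using simple assms unfolding simple_graph_def by (auto simp: doubleton_eq_iff)

lemma nbr_subset: "nbr E x \<subseteq> V"
  using edge_vertices by (auto simp: nbr_def)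

lemma finite_nbr: "finite (nbr E x)"
  using nbr_subset finite_vertices by (rule finite_subset)

lemma not_in_nbr_self: "x \<notin> nbr E x"
  using edge_vertices(3)[of x x] by (auto simp: nbr_def)

lemma deg_pos:
  assumes x: "x \<in> V"
  shows "0 < deg E x"
proof -
  obtain e where e: "e \<in> E" using edges_nonempty by blast
  then have "\<exists>a b. a \<in> V \<and> b \<in> V \<and> a \<noteq> b \<and> e = {a, b}"
    using simple by (simp add: simple_graph_def)
  then obtain a b where ab: "{a, b} \<in> E" "a \<in> V"
    using e by blast
  have "(x, a) \<in> {(u, v). {u, v} \<in> E}\<^sup>*"
    using connected x ab(2) by (simp add: graph_connected_def)
  then have "nbr E x \<noteq> {}"
  proof (rule converse_rtranclE)
    assume "x = a"
    then show ?thesis using ab(1) by (auto simp: nbr_def)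
  next
    fix w assume "(x, w) \<in> {(u, v). {u, v} \<in> E}"
    then show ?thesis by (auto simp: nbr_def)
  qed
  then show ?thesis
    using finite_nbr by (simp add: deg_eq_card_nbr card_gt_0_iff)
qed

lemma sum_walk2_rate:
  assumes x: "x1 \<in> V" "x2 \<in> V"
  shows "(\<Sum>\<sigma>\<in>V \<times> V - {(x1, x2)}. walk2_rate V E lam (x1, x2) \<sigma> * u \<sigma>)
    = walk2_sum E lam (\<lambda>y z. u (y, z)) x1 x2"
proof -
  let ?T = "V \<times> V - {(x1, x2)}"
  have move_first: "(\<Sum>\<sigma>\<in>?T. if \<sigma> \<in> (\<lambda>y. (y, x2)) ` nbr E x1 then lam / deg E x1 * u \<sigma> else 0)
      = (\<Sum>y\<in>nbr E x1. lam / deg E x1 * u (y, x2))"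
    using finite_vertices nbr_subset not_in_nbr_self x
    by (subst sum.inter_filter[symmetric]) (auto intro!: sum.reindex_cong[where l="\<lambda>y. (y, x2)"] inj_onI)
  have move_second: "(\<Sum>\<sigma>\<in>?T. if \<sigma> \<in> (\<lambda>y. (x1, y)) ` nbr E x2 then lam / deg E x2 * u \<sigma> else 0)
      = (\<Sum>y\<in>nbr E x2. lam / deg E x2 * u (x1, y))"
    using finite_vertices nbr_subset not_in_nbr_self x
    by (subst sum.inter_filter[symmetric]) (auto intro!: sum.reindex_cong[where l="\<lambda>y. (x1, y)"] inj_onI)
  have "walk2_rate V E lam (x1, x2) \<sigma> * u \<sigma> =
     (if \<sigma> \<in> (\<lambda>y. (y, x2)) ` nbr E x1 then lam / deg E x1 * u \<sigma> else 0)
   + (if \<sigma> \<in> (\<lambda>y. (x1, y)) ` nbr E x2 then lam / deg E x2 * u \<sigma> else 0)" for \<sigma>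
    by (cases \<sigma>) (auto simp: walk2_rate_def nbr_def algebra_simps)
  then show ?thesis
    by (simp add: sum.distrib move_first move_second walk2_sum_def sum_distrib_left)
qed

lemma total_rate_walk2:
  "x1 \<in> V \<Longrightarrow> x2 \<in> V \<Longrightarrow> total_rate (walk2_rate V E lam) (V \<times> V) (x1, x2) = 2 * lam"
  using sum_walk2_rate[of x1 x2 "\<lambda>_. 1"] walk2_sum_const[of E x1 x2 lam 1] deg_pos
  by (simp add: total_rate_def)

sublocale walk2: finite_ctmc "walk2_rate V E lam" "V \<times> V"
proof
  show "finite (V \<times> V)" using finite_vertices by simp
  show "0 < total_rate (walk2_rate V E lam) (V \<times> V) x" if "x \<in> V \<times> V" for x
    using that total_rate_walk2 lam_pos by (cases x) auto
  show "0 \<le> walk2_rate V E lam x y" for x y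
    using lam_pos by (cases x; cases y) (auto simp: walk2_rate_def)
qed

abbreviation "diagonal \<equiv> {(x, y). x \<in> V \<and> x = y}"

lemma meet_laplace_diag: "x \<in> V \<Longrightarrow> meet_laplace V E lam x x \<sigma> = 1"
  by (simp add: meet_laplace_def walk2.hit_laplace_start_in)

lemma meet_laplace_twice_diff_le_1:
  "x \<in> V \<Longrightarrow> y \<in> V \<Longrightarrow> 0 \<le> s \<Longrightarrow> 0 \<le> g \<Longrightarrow>
    2 * meet_laplace V E lam x y (s + g) - meet_laplace V E lam x y (s + 2 * g) \<le> 1"
  unfolding meet_laplace_def by (rule walk2.hit_laplace_twice_diff_le_1) auto

lemma meet_laplace_first_step:
  assumes "x \<in> V" "y \<in> V" "x \<noteq> y" and "0 \<le> \<sigma>"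
  shows "(2 * lam + \<sigma>) * meet_laplace V E lam x y \<sigma>
    = walk2_sum E lam (\<lambda>u v. meet_laplace V E lam u v \<sigma>) x y"
  using walk2.hit_laplace_first_step[of "(x, y)" diagonal \<sigma>] assms
  by (simp add: meet_laplace_def total_rate_walk2 sum_walk2_rate)

lemma meet_laplace_unique:
  assumes \<sigma>: "0 < \<sigma>"
    and u_diag: "\<And>x. x \<in> V \<Longrightarrow> u x x = 1"
    and u_step: "\<And>x y. x \<in> V \<Longrightarrow> y \<in> V \<Longrightarrow> x \<noteq> y \<Longrightarrow>
      (2 * lam + \<sigma>) * u x y = walk2_sum E lam u x y"
    and xy: "x \<in> V" "y \<in> V"
  shows "u x y = meet_laplace V E lam x y \<sigma>"
  using walk2.hit_laplace_unique[OF \<sigma>, of diagonal "\<lambda>(x, y). u x y" "(x, y)"] assms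
  by (force simp: meet_laplace_def total_rate_walk2 sum_walk2_rate)

lemma meet_laplace_swap:
  assumes "0 < \<sigma>" "x \<in> V" "y \<in> V"
  shows "meet_laplace V E lam y x \<sigma> = meet_laplace V E lam x y \<sigma>"
proof (rule meet_laplace_unique[where u="\<lambda>x y. meet_laplace V E lam y x \<sigma>"])
  show "(2 * lam + \<sigma>) * meet_laplace V E lam y' x' \<sigma>
      = walk2_sum E lam (\<lambda>x y. meet_laplace V E lam y x \<sigma>) x' y'"
    if "x' \<in> V" "y' \<in> V" "x' \<noteq> y'" for x' y'
    using meet_laplace_first_step[of y' x' \<sigma>] that assms by (simp add: walk2_sum_def)
qed (use assms meet_laplace_diag in auto)

lemma nbr_automorphism:
  assumes f: "graph_automorphism V E f" and x: "x \<in> V"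
  shows "nbr E (f x) = f ` nbr E x" "inj_on f (nbr E x)"
proof -
  have bij: "bij_betw f V V"
    and f_edge: "\<And>a b. a \<in> V \<Longrightarrow> b \<in> V \<Longrightarrow> {a, b} \<in> E \<longleftrightarrow> {f a, f b} \<in> E"
    using f by (auto simp: graph_automorphism_def)
  show "inj_on f (nbr E x)"
    using bij nbr_subset by (auto simp: bij_betw_def intro: inj_on_subset)
  have "z \<in> f ` nbr E x" if z: "z \<in> nbr E (f x)" for z
  proof -
    obtain w where "w \<in> V" "z = f w"
      using z nbr_subset bij by (force simp: bij_betw_def)
    then show ?thesis using z f_edge[OF x] by (auto simp: nbr_def)
  qed
  then show "nbr E (f x) = f ` nbr E x"
    using f_edge[OF x] nbr_subset by (auto simp: nbr_def)
qed

lemma walk2_sum_automorphism: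
  assumes f: "graph_automorphism V E f" and xy: "x \<in> V" "y \<in> V"
  shows "walk2_sum E lam g (f x) (f y) = walk2_sum E lam (\<lambda>u v. g (f u) (f v)) x y"
  using nbr_automorphism[OF f xy(1)] nbr_automorphism[OF f xy(2)]
  by (simp add: walk2_sum_def deg_eq_card_nbr card_image sum.reindex)

lemma meet_laplace_automorphism:
  assumes f: "graph_automorphism V E f" and "0 < \<sigma>" "x \<in> V" "y \<in> V"
  shows "meet_laplace V E lam (f x) (f y) \<sigma> = meet_laplace V E lam x y \<sigma>"
proof (rule meet_laplace_unique[where u="\<lambda>x y. meet_laplace V E lam (f x) (f y) \<sigma>"])
  have bij: "bij_betw f V V" using f by (simp add: graph_automorphism_def)
  show "(2 * lam + \<sigma>) * meet_laplace V E lam (f x') (f y') \<sigma>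
      = walk2_sum E lam (\<lambda>x y. meet_laplace V E lam (f x) (f y) \<sigma>) x' y'"
    if "x' \<in> V" "y' \<in> V" "x' \<noteq> y'" for x' y'
  proof -
    have "f x' \<in> V" "f y' \<in> V" "f x' \<noteq> f y'"
      using that bij by (auto simp: bij_betw_def inj_on_def)
    then show ?thesis
      using meet_laplace_first_step[of "f x'" "f y'" \<sigma>] walk2_sum_automorphism[OF f, of x' y'] that assms
      by simp
  qed
  show "meet_laplace V E lam (f x') (f x') \<sigma> = 1" if "x' \<in> V" for x'
    using that bij meet_laplace_diag by (auto simp: bij_betw_def)
qed (use assms in auto)

lemma meet_laplace_edge:
  assumes "edge_transitive V E" "0 < \<sigma>" "{a, b} \<in> E" "{x, y} \<in> E"
  shows "meet_laplace V E lam x y \<sigma> = meet_laplace V E lam a b \<sigma>"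
proof -
  obtain f where f: "graph_automorphism V E f" "f ` {a, b} = {x, y}"
    using assms unfolding edge_transitive_def by blast
  then have "f a = x \<and> f b = y \<or> f a = y \<and> f b = x"
    by (auto simp: doubleton_eq_iff)
  then show ?thesis
    using meet_laplace_automorphism[OF f(1)] meet_laplace_swap edge_vertices assms by metis
qed

section \<open>The two-agent SIS epidemic\<close>

lemma sis_normalize_in_sis_states:
  "y1 \<in> V \<Longrightarrow> y2 \<in> V \<Longrightarrow> sis_normalize (y1, y2, c1, c2) \<in> sis_states V"
  by (auto simp: sis_normalize_def sis_states_def)

lemma sis_normalize_moved_ne: "(y1, y2) \<noteq> (x1, x2) \<Longrightarrow> sis_normalize (y1, y2, c1, c2) \<noteq> (x1, x2, b1, b2)"
  by (auto simp: sis_normalize_def)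

lemma finite_sis_states: "finite (sis_states V)"
  using finite_vertices by (simp add: sis_states_def)

lemma sum_sis_rate:
  assumes x: "x1 \<in> V" "x2 \<in> V"
  shows "(\<Sum>\<sigma>\<in>sis_states V - {(x1, x2, b1, b2)}. sis_rate V E lam gam (x1, x2, b1, b2) \<sigma> * u \<sigma>)
    = walk2_sum E lam (\<lambda>y z. u (sis_normalize (y, z, b1, b2))) x1 x2
    + (if b1 \<and> sis_normalize (x1, x2, False, b2) \<noteq> (x1, x2, b1, b2)
       then gam * u (sis_normalize (x1, x2, False, b2)) else 0)
    + (if b2 \<and> sis_normalize (x1, x2, b1, False) \<noteq> (x1, x2, b1, b2)
       then gam * u (sis_normalize (x1, x2, b1, False)) else 0)"
proof -
  let ?T = "sis_states V - {(x1, x2, b1, b2)}"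
  let ?F1 = "\<lambda>y. sis_normalize (y, x2, b1, b2)"
  let ?F2 = "\<lambda>y. sis_normalize (x1, y, b1, b2)"
  have finite_T: "finite ?T"
    using finite_sis_states by simp
  have F1_T: "?F1 ` nbr E x1 \<subseteq> ?T"
  proof (rule image_subsetI)
    fix y assume "y \<in> nbr E x1"
    then have "y \<in> V" "y \<noteq> x1" using nbr_subset not_in_nbr_self by auto
    then show "?F1 y \<in> ?T" using x by (simp add: sis_normalize_in_sis_states sis_normalize_moved_ne)
  qed
  have F2_T: "?F2 ` nbr E x2 \<subseteq> ?T"
  proof (rule image_subsetI)
    fix y assume "y \<in> nbr E x2"
    then have "y \<in> V" "y \<noteq> x2" using nbr_subset not_in_nbr_self by auto
    then show "?F2 y \<in> ?T" using x by (simp add: sis_normalize_in_sis_states sis_normalize_moved_ne)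
  qed
  note move = sum_fibres_const_mult[OF finite_T finite_nbr F1_T]
    sum_fibres_const_mult[OF finite_T finite_nbr F2_T]
  have nbr_eq: "{y \<in> V. {x, y} \<in> E \<and> F y = \<sigma>} = {y \<in> nbr E x. F y = \<sigma>}" for x F \<sigma>
    using nbr_subset by (auto simp: nbr_def)
  have rate_split: "sis_rate V E lam gam (x1, x2, b1, b2) \<sigma> * u \<sigma> =
      (\<Sum>y\<in>{y \<in> nbr E x1. ?F1 y = \<sigma>}. lam / deg E x1) * u \<sigma>
    + (\<Sum>y\<in>{y \<in> nbr E x2. ?F2 y = \<sigma>}. lam / deg E x2) * u \<sigma>
    + (if b1 \<and> sis_normalize (x1, x2, False, b2) = \<sigma> then gam else 0) * u \<sigma>
    + (if b2 \<and> sis_normalize (x1, x2, b1, False) = \<sigma> then gam else 0) * u \<sigma>" for \<sigma>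
    unfolding nbr_eq[symmetric] by (simp add: sis_rate_def algebra_simps)
  show ?thesis
    unfolding rate_split sum.distrib move sum_if_eq_mult[OF finite_T]
    by (simp add: walk2_sum_def sum_distrib_left sis_normalize_in_sis_states[OF x])
qed

lemma total_rate_sis:
  assumes "x1 \<in> V" "x2 \<in> V"
  shows "total_rate (sis_rate V E lam gam) (sis_states V) (x1, x2, b1, b2) =
     2 * lam + (if b1 \<and> sis_normalize (x1, x2, False, b2) \<noteq> (x1, x2, b1, b2) then gam else 0)
    + (if b2 \<and> sis_normalize (x1, x2, b1, False) \<noteq> (x1, x2, b1, b2) then gam else 0)"
  using sum_sis_rate[OF assms, of gam b1 b2 "\<lambda>_. 1"] walk2_sum_const[of E x1 x2 lam 1] deg_pos assms
  by (simp add: total_rate_def)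

lemma finite_ctmc_sis:
  assumes "0 \<le> gam"
  shows "finite_ctmc (sis_rate V E lam gam) (sis_states V)"
proof
  show "finite (sis_states V)" by (rule finite_sis_states)
  show "0 < total_rate (sis_rate V E lam gam) (sis_states V) \<sigma>" if "\<sigma> \<in> sis_states V" for \<sigma>
    using that total_rate_sis lam_pos assms by (cases \<sigma>) (auto simp: sis_states_def)
  show "0 \<le> sis_rate V E lam gam \<sigma> \<sigma>'" for \<sigma> \<sigma>'
    using lam_pos assms
    by (cases \<sigma>) (auto simp: sis_rate_def intro!: add_nonneg_nonneg sum_nonneg)
qed

end

locale sis_epidemic = walk_graph V E lam
  for V :: "'v set" and E and lam +
  fixes gam s :: real and a b :: 'v
  assumes edge_transitive: "edge_transitive V E"
    and gam_pos: "0 < gam" and s_pos: "0 < s" and edge_ab: "{a, b} \<in> E"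
begin

abbreviation "meet1 x y \<equiv> meet_laplace V E lam x y (s + gam)"
abbreviation "meet2 x y \<equiv> meet_laplace V E lam x y (s + 2 * gam)"

definition coincident_laplace :: real where
  "coincident_laplace =
     2 * gam * ((1 - meet1 a b) / (s + gam) - (1 - meet2 a b) / (s + 2 * gam))
     / ((2 * lam + s) / (2 * lam) - 2 * meet1 a b + meet2 a b)"

text \<open>Let R be the
  time until both have recovered if they never met: P(R > t) is e^{-gam t} resp.
  2 e^{-gam t} - e^{-2 gam t}. The epidemic ends at R if R < M and otherwise restarts at M from the
  coincident, doubly infected state.\<close>

definition one_infected_laplace :: "'v \<Rightarrow> 'v \<Rightarrow> real" where
  "one_infected_laplace x y = gam * (1 - meet1 x y) / (s + gam) + meet1 x y * coincident_laplace"

definition both_infected_laplace :: "'v \<Rightarrow> 'v \<Rightarrow> real" where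
  "both_infected_laplace x y =
     2 * gam * ((1 - meet1 x y) / (s + gam) - (1 - meet2 x y) / (s + 2 * gam))
     + (2 * meet1 x y - meet2 x y) * coincident_laplace"

lemma walk2_sum_meet_affine:
  assumes "x \<in> V" "y \<in> V" "x \<noteq> y"
  shows "walk2_sum E lam (\<lambda>u v. \<alpha> + \<beta> * meet1 u v + \<delta> * meet2 u v) x y
    = 2 * lam * \<alpha> + \<beta> * (2 * lam + (s + gam)) * meet1 x y + \<delta> * (2 * lam + (s + 2 * gam)) * meet2 x y"
  using assms s_pos gam_pos deg_pos
  by (simp add: walk2_sum_add walk2_sum_scale walk2_sum_const meet_laplace_first_step[symmetric])

lemma one_infected_laplace_first_step:
  assumes "x \<in> V" "y \<in> V" "x \<noteq> y"
  shows "walk2_sum E lam one_infected_laplace x y + gam = (2 * lam + gam + s) * one_infected_laplace x y"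
proof -
  define \<alpha> where "\<alpha> = gam / (s + gam)"
  have affine: "one_infected_laplace = (\<lambda>u v. \<alpha> + (coincident_laplace - \<alpha>) * meet1 u v + 0 * meet2 u v)"
    by (simp add: fun_eq_iff one_infected_laplace_def \<alpha>_def diff_divide_distrib algebra_simps)
  have "walk2_sum E lam one_infected_laplace x y + gam - (2 * lam + gam + s) * one_infected_laplace x y
      = gam - (s + gam) * \<alpha>"
    unfolding affine walk2_sum_meet_affine[OF assms] by (simp add: algebra_simps)
  also have "(s + gam) * \<alpha> = gam"
    using s_pos gam_pos by (simp add: \<alpha>_def)
  finally show ?thesis by simp
qed

lemma both_infected_laplace_first_step:
  assumes "x \<in> V" "y \<in> V" "x \<noteq> y"
  shows "walk2_sum E lam both_infected_laplace x y + 2 * gam * one_infected_laplace x y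
    = (2 * lam + 2 * gam + s) * both_infected_laplace x y"
proof -
  define \<alpha>1 where "\<alpha>1 = gam / (s + gam)"
  define \<alpha>2 where "\<alpha>2 = gam / (s + 2 * gam)"
  let ?c = coincident_laplace
  have affine1: "one_infected_laplace = (\<lambda>u v. \<alpha>1 + (?c - \<alpha>1) * meet1 u v + 0 * meet2 u v)"
    by (simp add: fun_eq_iff one_infected_laplace_def \<alpha>1_def diff_divide_distrib algebra_simps)
  have affine2: "both_infected_laplace
      = (\<lambda>u v. (2 * \<alpha>1 - 2 * \<alpha>2) + (2 * ?c - 2 * \<alpha>1) * meet1 u v + (2 * \<alpha>2 - ?c) * meet2 u v)"
    by (simp add: fun_eq_iff both_infected_laplace_def \<alpha>1_def \<alpha>2_def diff_divide_distrib algebra_simps)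
  have "walk2_sum E lam both_infected_laplace x y + 2 * gam * one_infected_laplace x y
      - (2 * lam + 2 * gam + s) * both_infected_laplace x y
      = 2 * ((s + 2 * gam) * \<alpha>2 - gam) - 2 * ((s + gam) * \<alpha>1 - gam)"
    unfolding affine1 affine2 walk2_sum_meet_affine[OF assms] by (simp add: algebra_simps)
  moreover have "(s + gam) * \<alpha>1 = gam" "(s + 2 * gam) * \<alpha>2 = gam"
    using s_pos gam_pos by (simp_all add: \<alpha>1_def \<alpha>2_def)
  ultimately show ?thesis by simp
qed

lemma coincident_denominator_pos: "0 < (2 * lam + s) / (2 * lam) - 2 * meet1 a b + meet2 a b"
proof -
  have "2 * meet1 a b - meet2 a b \<le> 1"
    using meet_laplace_twice_diff_le_1[of a b s gam] edge_vertices[OF edge_ab] s_pos gam_pos by simp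
  moreover have "(2 * lam + s) / (2 * lam) = 1 + s / (2 * lam)"
    using lam_pos by (simp add: field_simps)
  moreover have "0 < s / (2 * lam)"
    using s_pos lam_pos by simp
  ultimately show ?thesis by linarith
qed

lemma both_infected_laplace_edge:
  assumes "{x, y} \<in> E"
  shows "2 * lam * both_infected_laplace x y = (2 * lam + s) * coincident_laplace"
proof -
  define N where "N = 2 * gam * ((1 - meet1 a b) / (s + gam) - (1 - meet2 a b) / (s + 2 * gam))"
  define D where "D = (2 * lam + s) / (2 * lam) - 2 * meet1 a b + meet2 a b"
  let ?c = coincident_laplace
  have "?c * D = N"
    using coincident_denominator_pos by (simp add: coincident_laplace_def N_def D_def)
  have "meet1 x y = meet1 a b" "meet2 x y = meet2 a b"
    using meet_laplace_edge[OF edge_transitive _ edge_ab assms] s_pos gam_pos by auto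
  then have "2 * lam * both_infected_laplace x y = 2 * lam * (N + (2 * meet1 a b - meet2 a b) * ?c)"
    by (simp add: both_infected_laplace_def N_def)
  also have "\<dots> = ?c * (2 * lam * D + 2 * lam * (2 * meet1 a b - meet2 a b))"
    unfolding \<open>?c * D = N\<close>[symmetric] by (simp add: algebra_simps)
  also have "2 * lam * D + 2 * lam * (2 * meet1 a b - meet2 a b) = 2 * lam + s"
    using lam_pos by (simp add: D_def field_simps)
  finally show ?thesis by simp
qed

lemma one_infected_laplace_diag: "x \<in> V \<Longrightarrow> one_infected_laplace x x = coincident_laplace"
  by (simp add: one_infected_laplace_def meet_laplace_diag)

lemma both_infected_laplace_diag: "x \<in> V \<Longrightarrow> both_infected_laplace x x = coincident_laplace"
  by (simp add: both_infected_laplace_def meet_laplace_diag)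

lemma walk2_sum_both_infected_laplace_diag:
  assumes "x \<in> V"
  shows "walk2_sum E lam both_infected_laplace x x = (2 * lam + s) * coincident_laplace"
proof -
  have "walk2_sum E lam both_infected_laplace x x
      = walk2_sum E lam (\<lambda>_ _. (2 * lam + s) * coincident_laplace / (2 * lam)) x x"
    using both_infected_laplace_edge lam_pos
    by (intro walk2_sum_cong) (auto simp: nbr_def insert_commute field_simps)
  also have "\<dots> = 2 * lam * ((2 * lam + s) * coincident_laplace / (2 * lam))"
    by (rule walk2_sum_const[OF deg_pos[OF assms] deg_pos[OF assms]])
  finally show ?thesis
    using lam_pos by simp
qed

text \<open>The last case, one infected agent at the position of the other, is never produced by
  sis_normalize but is a state of the chain; its value is forced by its own first-step equation.\<close>

definition end_laplace_guess :: "'v \<times> 'v \<times> bool \<times> bool \<Rightarrow> real" where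
  "end_laplace_guess = (\<lambda>(x1, x2, b1, b2).
     if \<not> b1 \<and> \<not> b2 then 1
     else if b1 \<and> b2 then both_infected_laplace x1 x2
     else if x1 \<noteq> x2 then one_infected_laplace x1 x2
     else (walk2_sum E lam one_infected_laplace x1 x1 + gam) / (2 * lam + gam + s))"

lemma end_laplace_guess_normalize:
  assumes "y \<in> V" "z \<in> V" "b1 \<or> b2"
  shows "end_laplace_guess (sis_normalize (y, z, b1, b2))
    = (if b1 \<and> b2 then both_infected_laplace y z else one_infected_laplace y z)"
  using assms both_infected_laplace_diag one_infected_laplace_diag
  by (cases "y = z") (auto simp: sis_normalize_def end_laplace_guess_def)

lemma end_laplace_guess_extinct: "end_laplace_guess (x, y, False, False) = 1"
  by (simp add: end_laplace_guess_def)

lemma end_laplace_guess_both: "end_laplace_guess (x, y, True, True) = both_infected_laplace x y"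
  by (simp add: end_laplace_guess_def)

lemma end_laplace_guess_one_coincident:
  "b1 \<noteq> b2 \<Longrightarrow> (2 * lam + gam + s) * end_laplace_guess (x, x, b1, b2)
    = walk2_sum E lam one_infected_laplace x x + gam"
  using lam_pos gam_pos s_pos by (auto simp: end_laplace_guess_def)

abbreviation "extinct_states \<equiv> {\<sigma> \<in> sis_states V. \<not> fst (snd (snd \<sigma>)) \<and> \<not> snd (snd (snd \<sigma>))}"

lemma end_laplace_guess_first_step:
  assumes \<sigma>: "\<sigma> \<in> sis_states V" "\<sigma> \<notin> extinct_states"
  shows "(total_rate (sis_rate V E lam gam) (sis_states V) \<sigma> + s) * end_laplace_guess \<sigma>
    = (\<Sum>\<sigma>'\<in>sis_states V - {\<sigma>}. sis_rate V E lam gam \<sigma> \<sigma>' * end_laplace_guess \<sigma>')"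
proof -
  obtain x1 x2 b1 b2 where \<sigma>_eq: "\<sigma> = (x1, x2, b1, b2)" and x: "x1 \<in> V" "x2 \<in> V"
    and infected: "b1 \<or> b2"
    using \<sigma> by (cases \<sigma>) (auto simp: sis_states_def)
  have walk: "walk2_sum E lam (\<lambda>y z. end_laplace_guess (sis_normalize (y, z, b1, b2))) x1 x2
      = walk2_sum E lam (if b1 \<and> b2 then both_infected_laplace else one_infected_laplace) x1 x2"
    using subsetD[OF nbr_subset[of x1]] subsetD[OF nbr_subset[of x2]] x infected
    by (intro walk2_sum_cong) (auto simp: end_laplace_guess_normalize)
  show ?thesis
  proof (cases "x1 = x2")
    case False
    then have "sis_normalize (x1, x2, c1, c2) = (x1, x2, c1, c2)" for c1 c2
      by (simp add: sis_normalize_def)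
    then show ?thesis
      using False infected one_infected_laplace_first_step[OF x False] both_infected_laplace_first_step[OF x False]
      unfolding \<sigma>_eq sum_sis_rate[OF x] total_rate_sis[OF x] walk
      by (auto simp: end_laplace_guess_def algebra_simps)
  next
    case True
    \<comment> \<open>a recovery of one of two coincident infected agents is undone at once by sis_normalize\<close>
    then show ?thesis
      using infected x walk2_sum_both_infected_laplace_diag[of x1]
        end_laplace_guess_one_coincident[of b1 b2 x1]
      unfolding \<sigma>_eq sum_sis_rate[OF x] total_rate_sis[OF x] walk
      by (auto simp: end_laplace_guess_extinct end_laplace_guess_both sis_normalize_def
          both_infected_laplace_diag algebra_simps)
  qed
qed

lemma sis_end_laplace_eq:
  assumes "v0 \<in> V"
  shows "sis_end_laplace V E lam gam v0 s = coincident_laplace"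
proof -
  interpret sis: finite_ctmc "sis_rate V E lam gam" "sis_states V"
    using gam_pos by (intro finite_ctmc_sis) simp
  have "end_laplace_guess (v0, v0, True, True)
      = hit_laplace (sis_rate V E lam gam) (sis_states V) (v0, v0, True, True) extinct_states s"
    using s_pos end_laplace_guess_first_step assms
    by (intro sis.hit_laplace_unique) (auto simp: end_laplace_guess_def sis_states_def)
  then show ?thesis
    using assms by (simp add: sis_end_laplace_def end_laplace_guess_def both_infected_laplace_diag)
qed

end

theorem theorem1:
  fixes V :: "'v set" and E :: "'v set set" and lam gam s :: real and v0 a b :: 'v
  assumes "simple_graph V E" and "graph_connected V E" and "edge_transitive V E"
    and "lam > 0" and "gam > 0" and "s > 0"
    and "v0 \<in> V" and "{a, b} \<in> E"
  shows "sis_end_laplace V E lam gam v0 s =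
    2 * gam * ((1 - meet_laplace V E lam a b (s + gam)) / (s + gam)
               - (1 - meet_laplace V E lam a b (s + 2 * gam)) / (s + 2 * gam))
    / ((2 * lam + s) / (2 * lam) - 2 * meet_laplace V E lam a b (s + gam)
       + meet_laplace V E lam a b (s + 2 * gam))"
proof -
  interpret sis_epidemic V E lam gam s a b
    using assms by unfold_locales auto
  show ?thesis
    using sis_end_laplace_eq[OF \<open>v0 \<in> V\<close>] by (simp add: coincident_laplace_def)
qed

end
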